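(* Let $M$ be an $n\times n$ complex Hadamard matrix, let $\Gamma$ be the group of all $n\times n$ complex monomial matrices $P$ with $PMP^\ast=M$, let $\pi\colon\Gamma\to\mathrm{Sym}_n$ send a monomial matrix to its underlying permutation, let $G=\pi(\Gamma)$, assume $G$ is transitive, and let $\Gamma_{\rm f}=\{L\in\Gamma:\det(L)=1\}$. Suppose that $G$ and $\Gamma_{\rm f}$ are perfect. Let $\hat{G}$ be a Schur cover of $G$, let $H\leq G$ be a point stabiliser, and let $\hat{H}\leq\hat{G}$ be the full preimage of $H$ under the projection $\hat{G}\to G$. Then $\Gamma_{\rm f}=\rho(\hat{G})$ for some representation $\rho$ of $\hat{G}$ induced from a linear character of $\hat{H}$. *)

theory Defs
  imports "HOL-Analysis.Analysis" "HOL-Algebra.Solvable_Groups" "HOL-Algebra.Bij"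
begin

definition cnj_transpose :: "complex^'n^'n \<Rightarrow> complex^'n^'n" where
  "cnj_transpose P = (\<chi> i j. cnj (P $ j $ i))"

definition complex_hadamard :: "complex^'n::finite^'n \<Rightarrow> bool" where
  "complex_hadamard M \<longleftrightarrow> (\<forall>i j. norm (M $ i $ j) = 1)
     \<and> M ** cnj_transpose M = of_nat CARD('n) *\<^sub>R mat 1"

definition monomial_mat :: "complex^'n^'n \<Rightarrow> bool" where
  "monomial_mat P \<longleftrightarrow> (\<forall>i. \<exists>!j. P $ i $ j \<noteq> 0) \<and> (\<forall>j. \<exists>!i. P $ i $ j \<noteq> 0)"

text \<open>Underlying permutation of a monomial matrix: P e_j is a multiple of e_(sigma j).
  With this convention the map is a homomorphism with respect to composition.\<close>
definition monomial_perm :: "complex^'n^'n \<Rightarrow> 'n \<Rightarrow> 'n" where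
  "monomial_perm P = (\<lambda>j. THE i. P $ i $ j \<noteq> 0)"

definition mono_aut :: "complex^'n^'n \<Rightarrow> (complex^'n^'n) set" where
  "mono_aut M = {P. monomial_mat P \<and> P ** M ** cnj_transpose P = M}"

definition mono_aut_f :: "complex^'n::finite^'n \<Rightarrow> (complex^'n^'n) set" where
  "mono_aut_f M = {L \<in> mono_aut M. det L = 1}"

definition mat_group :: "(complex^'n::finite^'n) set \<Rightarrow> (complex^'n^'n) monoid" where
  "mat_group S = \<lparr>carrier = S, mult = (**), one = mat 1\<rparr>"

definition perm_group :: "('n \<Rightarrow> 'n) set \<Rightarrow> ('n \<Rightarrow> 'n) monoid" where
  "perm_group G = (BijGroup (UNIV :: 'n set)) \<lparr>carrier := G\<rparr>"

definition transitive_perms :: "('n \<Rightarrow> 'n) set \<Rightarrow> bool" where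
  "transitive_perms G \<longleftrightarrow> (\<forall>i j. \<exists>\<sigma>\<in>G. \<sigma> i = j)"

definition perfect_group :: "('a, 'b) monoid_scheme \<Rightarrow> bool" where
  "perfect_group G \<longleftrightarrow> derived G (carrier G) = carrier G"

definition group_center :: "('a, 'b) monoid_scheme \<Rightarrow> 'a set" where
  "group_center G = {z \<in> carrier G. \<forall>g \<in> carrier G. z \<otimes>\<^bsub>G\<^esub> g = g \<otimes>\<^bsub>G\<^esub> z}"

definition stem_extension ::
  "('e, 'c) monoid_scheme \<Rightarrow> ('e \<Rightarrow> 'a) \<Rightarrow> ('a, 'b) monoid_scheme \<Rightarrow> bool" where
  "stem_extension E \<phi> G \<longleftrightarrow> group E \<and> group G \<and> \<phi> \<in> hom E G
     \<and> \<phi> ` carrier E = carrier G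
     \<and> kernel E G \<phi> \<subseteq> group_center E \<inter> derived E (carrier E)"

text \<open>All stem extensions of a finite group are finite, hence can be realised with carrier
  in the countable type nat; so comparing with those is comparing with all of them.\<close>
definition schur_cover ::
  "('e, 'c) monoid_scheme \<Rightarrow> ('e \<Rightarrow> 'a) \<Rightarrow> ('a, 'b) monoid_scheme \<Rightarrow> bool" where
  "schur_cover E \<phi> G \<longleftrightarrow> stem_extension E \<phi> G \<and> finite (carrier E)
     \<and> (\<forall>(K :: nat monoid) \<psi>. stem_extension K \<psi> G \<longrightarrow> card (carrier K) \<le> card (carrier E))"

definition linear_character :: "('e, 'c) monoid_scheme \<Rightarrow> 'e set \<Rightarrow> ('e \<Rightarrow> complex) \<Rightarrow> bool" where 
  "linear_character E H chr \<longleftrightarrow> (\<forall>h\<in>H. chr h \<noteq> 0)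
     \<and> (\<forall>h\<in>H. \<forall>k\<in>H. chr (h \<otimes>\<^bsub>E\<^esub> k) = chr h * chr k)"

text \<open>t is a left transversal of H in E indexed by 'n (so [E:H] = CARD('n)).\<close>
definition left_transversal :: "('e, 'c) monoid_scheme \<Rightarrow> 'e set \<Rightarrow> ('n \<Rightarrow> 'e) \<Rightarrow> bool" where
  "left_transversal E H t \<longleftrightarrow> (\<forall>j. t j \<in> carrier E)
     \<and> (\<forall>g\<in>carrier E. \<exists>!j. inv\<^bsub>E\<^esub> (t j) \<otimes>\<^bsub>E\<^esub> g \<in> H)"

text \<open>Matrix of the induced representation Ind_H^E lambda with respect to the basis
  t_j \<otimes> 1 (t a left transversal): entry (j,k) is lambda(t_j^-1 g t_k) if this lies in H
  and 0 otherwise.\<close>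
definition induced_mat ::
  "('e, 'c) monoid_scheme \<Rightarrow> 'e set \<Rightarrow> ('e \<Rightarrow> complex) \<Rightarrow> ('n \<Rightarrow> 'e) \<Rightarrow> 'e \<Rightarrow> complex^'n^'n" where
  "induced_mat E H chr t g = (\<chi> j k. let x = inv\<^bsub>E\<^esub> (t j) \<otimes>\<^bsub>E\<^esub> g \<otimes>\<^bsub>E\<^esub> t k in
       if x \<in> H then chr x else 0)"

definition induced_from_linear_char ::
  "('e, 'c) monoid_scheme \<Rightarrow> 'e set \<Rightarrow> ('e \<Rightarrow> complex^'n::finite^'n) \<Rightarrow> bool" where
  "induced_from_linear_char E H \<rho> \<longleftrightarrow>
     (\<forall>g\<in>carrier E. invertible (\<rho> g))
     \<and> (\<forall>g\<in>carrier E. \<forall>h\<in>carrier E. \<rho> (g \<otimes>\<^bsub>E\<^esub> h) = \<rho> g ** \<rho> h)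
     \<and> (\<exists>chr t (S :: complex^'n^'n). linear_character E H chr \<and> left_transversal E H t \<and> invertible S
          \<and> (\<forall>g\<in>carrier E. \<rho> g ** S = S ** induced_mat E H chr t g))"

end

theory Submission
  imports Defs
begin

text \<open>The kernel of the projection \<open>\<Gamma>\<^sub>f \<rightarrow> G\<close> consists of scalar matrices, because a
  Hadamard matrix has no zero entries; hence \<open>\<Gamma>\<^sub>f\<close> is a finite perfect central extension of
  the perfect group \<open>G\<close>. In the fibre product of a Schur cover \<open>\<hat>G\<close> with \<open>\<Gamma>\<^sub>f\<close> over
  \<open>G\<close>, the derived subgroup is a stem extension of \<open>G\<close> mapping onto both factors, and the
  maximality of \<open>|\<hat>G|\<close> makes it the graph of a surjection \<open>\<theta> : \<hat>G \<rightarrow> \<Gamma>\<^sub>f\<close> over \<open>G\<close>.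
  A monomial representation with transitive permutation action, such as \<open>\<theta>\<close>, is induced from
  the linear character of a point stabiliser given by one diagonal entry; a diagonal matrix built
  from a transversal intertwines the two.\<close>

section \<open>Matrices\<close>

lemma cnj_transpose_nth [simp]: "cnj_transpose P $ i $ j = cnj (P $ j $ i)"
  by (simp add: cnj_transpose_def)

lemma cnj_transpose_cnj_transpose [simp]: "cnj_transpose (cnj_transpose P) = P"
  by (simp add: vec_eq_iff)

lemma cnj_transpose_mat [simp]: "cnj_transpose (mat c :: complex^'n::finite^'n) = mat (cnj c)"
  by (simp add: vec_eq_iff mat_def)

lemma cnj_transpose_matrix_mul:
  "cnj_transpose (A ** B) = cnj_transpose B ** cnj_transpose (A :: complex^'n::finite^'n)"
  by (simp add: vec_eq_iff matrix_matrix_mult_def mult.commute)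

lemma det_cnj_transpose: "det (cnj_transpose A) = cnj (det (A :: complex^'n::finite^'n))"
proof -
  have "cnj_transpose A = transpose (\<chi> i j. cnj (A $ i $ j))"
    by (simp add: vec_eq_iff transpose_def)
  then have "det (cnj_transpose A) = det (\<chi> i j. cnj (A $ i $ j))"
    by simp
  also have "\<dots> = cnj (det A)"
    unfolding det_def by simp
  finally show ?thesis .
qed

lemma matrix_mul_nth_single_col:
  assumes "\<And>l. B $ l $ k \<noteq> 0 \<Longrightarrow> l = c"
  shows "(A ** B) $ j $ k = A $ j $ c * B $ c $ k"
proof -
  have "(A ** B) $ j $ k = (\<Sum>l\<in>UNIV. A $ j $ l * B $ l $ k)"
    by (simp add: matrix_matrix_mult_def)
  also have "\<dots> = (\<Sum>l\<in>UNIV. if l = c then A $ j $ l * B $ l $ k else 0)"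
    using assms by (intro sum.cong refl) (metis mult_zero_right mult_zero_left)
  finally show ?thesis
    by simp
qed

lemma matrix_mul_nth_single_row:
  assumes "\<And>l. A $ j $ l \<noteq> 0 \<Longrightarrow> l = c"
  shows "(A ** B) $ j $ k = A $ j $ c * B $ c $ k"
proof -
  have "(A ** B) $ j $ k = (\<Sum>l\<in>UNIV. A $ j $ l * B $ l $ k)"
    by (simp add: matrix_matrix_mult_def)
  also have "\<dots> = (\<Sum>l\<in>UNIV. if l = c then A $ j $ l * B $ l $ k else 0)"
    using assms by (intro sum.cong refl) (metis mult_zero_right mult_zero_left)
  finally show ?thesis
    by simp
qed

lemma mat_matrix_mul_nth [simp]: "(mat c ** A) $ j $ k = c * A $ j $ k"
  by (subst matrix_mul_nth_single_row[where c = j]) (auto simp: mat_def split: if_splits)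

lemma matrix_mul_mat_nth [simp]: "(A ** mat c) $ j $ k = A $ j $ k * c"
  by (subst matrix_mul_nth_single_col[where c = k]) (auto simp: mat_def split: if_splits)

lemma mat_matrix_mul_commute: "mat c ** A = A ** mat (c :: 'a::comm_semiring_1)"
  by (simp add: vec_eq_iff mult.commute)

lemma det_mat: "det (mat c :: 'a::comm_ring_1^'n::finite^'n) = c ^ CARD('n)"
  by (subst det_diagonal) (simp_all add: mat_def)

lemma monomial_mat_nth_nonzero_iff:
  assumes "monomial_mat P"
  shows "P $ j $ k \<noteq> 0 \<longleftrightarrow> j = monomial_perm P k"
proof -
  from assms have unique: "\<exists>!j. P $ j $ k \<noteq> 0"
    by (auto simp: monomial_mat_def)
  then have "P $ (THE j. P $ j $ k \<noteq> 0) $ k \<noteq> 0"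
    by (rule theI')
  with unique show ?thesis
    unfolding monomial_perm_def by blast
qed

lemma monomial_mat_row_unique: "monomial_mat P \<Longrightarrow> P $ j $ k \<noteq> 0 \<Longrightarrow> P $ j $ l \<noteq> 0 \<Longrightarrow> l = k"
  unfolding monomial_mat_def by metis

lemma bij_monomial_perm:
  assumes "monomial_mat P"
  shows "bij (monomial_perm P)"
proof (rule bijI)
  show "inj (monomial_perm P)"
  proof (rule injI)
    fix k l
    assume "monomial_perm P k = monomial_perm P l"
    then have "P $ monomial_perm P k $ k \<noteq> 0" "P $ monomial_perm P k $ l \<noteq> 0"
      using monomial_mat_nth_nonzero_iff[OF assms] by metis+
    then show "k = l"
      using monomial_mat_row_unique[OF assms] by metis
  qed
  have "j \<in> range (monomial_perm P)" for j
    using assms monomial_mat_nth_nonzero_iff unfolding monomial_mat_def by blast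
  then show "surj (monomial_perm P)"
    by blast
qed

lemma monomial_matI:
  assumes "bij \<sigma>" and "\<And>j k. P $ j $ k \<noteq> 0 \<longleftrightarrow> j = \<sigma> k"
  shows "monomial_mat P" and "monomial_perm P = \<sigma>"
proof -
  show "monomial_mat P"
    unfolding monomial_mat_def
  proof (intro conjI allI)
    show "\<exists>!k. P $ j $ k \<noteq> 0" for j
      using assms by (metis bij_pointE)
    show "\<exists>!j. P $ j $ k \<noteq> 0" for k
      using assms by metis
  qed
  then show "monomial_perm P = \<sigma>"
    using monomial_mat_nth_nonzero_iff assms(2) by (metis ext)
qed

lemma monomial_mat_mult:
  assumes P: "monomial_mat P" and Q: "monomial_mat Q"
  shows "monomial_mat (P ** Q)" and "monomial_perm (P ** Q) = monomial_perm P \<circ> monomial_perm Q"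
proof -
  have "(P ** Q) $ j $ k = P $ j $ monomial_perm Q k * Q $ monomial_perm Q k $ k" for j k
    by (rule matrix_mul_nth_single_col) (use monomial_mat_nth_nonzero_iff[OF Q] in blast)
  then have "(P ** Q) $ j $ k \<noteq> 0 \<longleftrightarrow> j = (monomial_perm P \<circ> monomial_perm Q) k" for j k
    using monomial_mat_nth_nonzero_iff[OF P] monomial_mat_nth_nonzero_iff[OF Q] by auto
  moreover have "bij (monomial_perm P \<circ> monomial_perm Q)"
    using bij_monomial_perm[OF P] bij_monomial_perm[OF Q] by (rule bij_comp[rotated])
  ultimately show "monomial_mat (P ** Q)" "monomial_perm (P ** Q) = monomial_perm P \<circ> monomial_perm Q"
    using monomial_matI by blast+
qed

lemma monomial_mat_one: "monomial_mat (mat 1 :: complex^'n::finite^'n)"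
  and monomial_perm_one: "monomial_perm (mat 1 :: complex^'n::finite^'n) = id"
  using monomial_matI[of id "mat 1 :: complex^'n::finite^'n"] by (auto simp: mat_def)

lemma monomial_mat_cnj_transpose: "monomial_mat P \<Longrightarrow> monomial_mat (cnj_transpose P)"
  unfolding monomial_mat_def by simp

lemma monomial_mat_scale:
  assumes "monomial_mat P" and "c \<noteq> 0"
  shows "monomial_mat (mat c ** P)" and "monomial_perm (mat c ** P) = monomial_perm P"
proof -
  have "(mat c ** P) $ j $ k \<noteq> 0 \<longleftrightarrow> j = monomial_perm P k" for j k
    using monomial_mat_nth_nonzero_iff[OF assms(1)] assms(2) by simp
  then show "monomial_mat (mat c ** P)" "monomial_perm (mat c ** P) = monomial_perm P"
    using monomial_matI[OF bij_monomial_perm[OF assms(1)]] by blast+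
qed

lemma invertible_monomial_mat:
  assumes P: "monomial_mat P"
  shows "invertible P"
proof -
  define Q where "Q = (\<chi> k j. if P $ j $ k \<noteq> 0 then inverse (P $ j $ k) else 0)"
  have "(P ** Q) $ j $ k = mat 1 $ j $ k" for j k
  proof -
    obtain l where l: "P $ j $ l \<noteq> 0"
      using P unfolding monomial_mat_def by metis
    have "(P ** Q) $ j $ k = P $ j $ l * Q $ l $ k"
      using monomial_mat_row_unique[OF P l] by (intro matrix_mul_nth_single_row) blast
    then show ?thesis
      using l monomial_mat_nth_nonzero_iff[OF P] by (auto simp: Q_def mat_def)
  qed
  then have "P ** Q = mat 1"
    by (simp add: vec_eq_iff)
  then show ?thesis
    unfolding invertible_right_inverse by blast
qed

lemma invertible_diagonal:
  assumes "\<And>j. d j \<noteq> 0"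
  shows "invertible ((\<chi> j k. if j = k then d j else 0) :: complex^'n::finite^'n)"
  by (rule invertible_monomial_mat, rule monomial_matI(1)[of id]) (use assms in auto)

lemma monomial_mat_conj_nth:
  assumes P: "monomial_mat P" and "P $ j $ l \<noteq> 0" and "P $ k $ m \<noteq> 0"
  shows "(P ** M ** cnj_transpose P) $ j $ k = P $ j $ l * M $ l $ m * cnj (P $ k $ m)"
proof -
  have "(P ** M ** cnj_transpose P) $ j $ k = (P ** M) $ j $ m * cnj (P $ k $ m)"
    using monomial_mat_row_unique[OF P assms(3)] by (subst matrix_mul_nth_single_col[where c = m]) auto
  also have "(P ** M) $ j $ m = P $ j $ l * M $ l $ m"
    using monomial_mat_row_unique[OF P assms(2)] by (intro matrix_mul_nth_single_row) auto
  finally show ?thesis .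
qed

section \<open>Monomial automorphisms of a complex Hadamard matrix\<close>

lemma mono_aut_memD: "P \<in> mono_aut M \<Longrightarrow> monomial_mat P"
  "P \<in> mono_aut M \<Longrightarrow> P ** M ** cnj_transpose P = M"
  by (simp_all add: mono_aut_def)

lemma complex_hadamard_nth_nonzero: "complex_hadamard M \<Longrightarrow> M $ j $ k \<noteq> 0"
  unfolding complex_hadamard_def by (metis norm_zero zero_neq_one)

lemma norm_mono_aut_nth:
  assumes M: "complex_hadamard M" and P: "P \<in> mono_aut M" and "P $ j $ l \<noteq> 0"
  shows "norm (P $ j $ l) = 1"
proof -
  have "M $ j $ j = P $ j $ l * M $ l $ l * cnj (P $ j $ l)"
    using monomial_mat_conj_nth[OF mono_aut_memD(1)[OF P] assms(3) assms(3), of M] mono_aut_memD(2)[OF P]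
    by simp
  then have "norm (M $ j $ j) = norm (P $ j $ l) ^ 2 * norm (M $ l $ l)"
    by (simp add: norm_mult power2_eq_square)
  then have "norm (P $ j $ l) ^ 2 = 1"
    using M by (simp add: complex_hadamard_def)
  then show ?thesis
    using norm_ge_zero[of "P $ j $ l"] by (auto simp: power2_eq_1_iff)
qed

lemma mono_aut_unitary:
  assumes M: "complex_hadamard M" and P: "P \<in> mono_aut M"
  shows "P ** cnj_transpose P = mat 1" and "cnj_transpose P ** P = mat 1"
proof -
  have mono: "monomial_mat P"
    using P by (rule mono_aut_memD)
  have "(P ** cnj_transpose P) $ j $ k = mat 1 $ j $ k" for j k
  proof -
    obtain l where l: "P $ j $ l \<noteq> 0"
      using mono unfolding monomial_mat_def by metis
    have "(P ** cnj_transpose P) $ j $ k = P $ j $ l * cnj (P $ k $ l)"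
      using monomial_mat_row_unique[OF mono l] by (subst matrix_mul_nth_single_row[where c = l]) auto
    moreover have "P $ j $ l * cnj (P $ j $ l) = 1"
      using norm_mono_aut_nth[OF M P l] complex_norm_square[of "P $ j $ l"] by simp
    ultimately show ?thesis
      using l monomial_mat_nth_nonzero_iff[OF mono] by (auto simp: mat_def)
  qed
  then show "P ** cnj_transpose P = mat 1"
    by (simp add: vec_eq_iff)
  then show "cnj_transpose P ** P = mat 1"
    by (simp add: matrix_left_right_inverse)
qed

lemma mono_aut_mult:
  assumes "P \<in> mono_aut M" and "Q \<in> mono_aut M"
  shows "P ** Q \<in> mono_aut M"
proof -
  have "(P ** Q) ** M ** cnj_transpose (P ** Q) = P ** (Q ** M ** cnj_transpose Q) ** cnj_transpose P"
    by (simp add: cnj_transpose_matrix_mul matrix_mul_assoc)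
  then show ?thesis
    using assms by (simp add: mono_aut_def monomial_mat_mult)
qed

lemma mono_aut_cnj_transpose:
  assumes M: "complex_hadamard M" and P: "P \<in> mono_aut M"
  shows "cnj_transpose P \<in> mono_aut M"
proof -
  have "cnj_transpose P ** M ** P = cnj_transpose P ** (P ** M ** cnj_transpose P) ** P"
    using mono_aut_memD(2)[OF P] by simp
  also have "\<dots> = (cnj_transpose P ** P) ** M ** (cnj_transpose P ** P)"
    by (simp add: matrix_mul_assoc)
  finally show ?thesis
    using mono_aut_unitary[OF M P] P by (simp add: mono_aut_def monomial_mat_cnj_transpose)
qed

lemma mat_one_mono_aut: "mat 1 \<in> mono_aut M"
  by (simp add: mono_aut_def monomial_mat_one)

lemma mono_aut_scale:
  assumes "norm c = 1" and P: "P \<in> mono_aut M"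
  shows "mat c ** P \<in> mono_aut M"
proof -
  have "c * cnj c = 1"
    using assms(1) complex_norm_square[of c] by simp
  then have "mat c ** (P ** M ** cnj_transpose P) ** mat (cnj c) = M"
    using mono_aut_memD(2)[OF P] by (simp add: vec_eq_iff mult.commute mult.left_commute)
  then have "(mat c ** P) ** M ** cnj_transpose (mat c ** P) = M"
    by (simp add: cnj_transpose_matrix_mul matrix_mul_assoc)
  moreover have "c \<noteq> 0"
    using assms(1) by auto
  ultimately show ?thesis
    using monomial_mat_scale(1) mono_aut_memD(1)[OF P] by (simp add: mono_aut_def)
qed

lemma norm_det_mono_aut:
  assumes "complex_hadamard M" and "P \<in> mono_aut M"
  shows "norm (det P) = 1"
proof -
  have "det P * cnj (det P) = 1"
    using arg_cong[OF mono_aut_unitary(1)[OF assms], of det] by (simp add: det_mul det_cnj_transpose)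
  then have "norm (det P) ^ 2 = 1"
    using complex_norm_square[of "det P"] by (metis of_real_eq_1_iff)
  then show ?thesis
    using norm_ge_zero[of "det P"] by (auto simp: power2_eq_1_iff)
qed

lemma mono_aut_scalar_if_perm_id:
  assumes M: "\<And>j k. M $ j $ k \<noteq> 0" and P: "P \<in> mono_aut M" and id: "monomial_perm P = id"
  shows "\<exists>c. P = mat c"
proof -
  have nonzero: "P $ j $ l \<noteq> 0 \<longleftrightarrow> j = l" for j l
    using monomial_mat_nth_nonzero_iff[OF mono_aut_memD(1)[OF P]] id by simp
  have "M $ j $ k * (P $ j $ j * cnj (P $ k $ k)) = M $ j $ k * 1" for j
    using monomial_mat_conj_nth[OF mono_aut_memD(1)[OF P], of j j k k M] nonzero mono_aut_memD(2)[OF P]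
    by (simp add: mult_ac)
  then have "P $ j $ j * cnj (P $ k $ k) = P $ k $ k * cnj (P $ k $ k)" for j
    using M by (metis mult_left_cancel)
  then have "P $ j $ j = P $ k $ k" for j
    using nonzero[of k k] by simp
  then have "P = mat (P $ k $ k)"
    using nonzero by (auto simp: vec_eq_iff mat_def)
  then show ?thesis ..
qed

lemma mono_aut_f_mult: "P \<in> mono_aut_f M \<Longrightarrow> Q \<in> mono_aut_f M \<Longrightarrow> P ** Q \<in> mono_aut_f M"
  by (simp add: mono_aut_f_def mono_aut_mult det_mul)

lemma mono_aut_f_cnj_transpose:
  "complex_hadamard M \<Longrightarrow> P \<in> mono_aut_f M \<Longrightarrow> cnj_transpose P \<in> mono_aut_f M"
  by (simp add: mono_aut_f_def mono_aut_cnj_transpose det_cnj_transpose)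

lemma mat_one_mono_aut_f: "mat 1 \<in> mono_aut_f M"
  by (simp add: mono_aut_f_def mat_one_mono_aut)

lemma mat_group_simps [simp]:
  "carrier (mat_group S) = S" "x \<otimes>\<^bsub>mat_group S\<^esub> y = x ** y" "\<one>\<^bsub>mat_group S\<^esub> = mat 1"
  by (simp_all add: mat_group_def)

lemma group_mono_aut_f:
  assumes M: "complex_hadamard M"
  shows "group (mat_group (mono_aut_f M))"
proof (rule groupI)
  fix P
  assume "P \<in> carrier (mat_group (mono_aut_f M))"
  then have "cnj_transpose P \<in> mono_aut_f M" and "cnj_transpose P ** P = mat 1"
    using mono_aut_f_cnj_transpose[OF M] mono_aut_unitary(2)[OF M] by (auto simp: mono_aut_f_def)
  then show "\<exists>Q\<in>carrier (mat_group (mono_aut_f M)). Q \<otimes>\<^bsub>mat_group (mono_aut_f M)\<^esub> P = \<one>\<^bsub>mat_group (mono_aut_f M)\<^esub>"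
    by auto
qed (simp_all add: mono_aut_f_mult mat_one_mono_aut_f matrix_mul_assoc)

lemma unimodular_nth_root:
  fixes d :: complex
  assumes "norm d = 1" and "n > 0"
  shows "\<exists>c. norm c = 1 \<and> c ^ n = d"
proof -
  have "d \<noteq> 0"
    using assms(1) by auto
  define c where "c = exp (Ln d / of_nat n)"
  have "c ^ n = exp (of_nat n * (Ln d / of_nat n))"
    unfolding c_def by (rule exp_of_nat_mult[symmetric])
  then have "c ^ n = d"
    using \<open>d \<noteq> 0\<close> assms(2) by simp
  moreover have "norm c = 1"
    using \<open>d \<noteq> 0\<close> assms(1) by (simp add: c_def Re_Ln)
  ultimately show ?thesis
    by blast
qed

text \<open>Every \<open>P \<in> \<Gamma>\<close> can be rescaled into \<open>\<Gamma>\<^sub>f\<close> by an \<open>n\<close>-th root of \<open>det P\<inverse>\<close>.\<close>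
lemma monomial_perm_image_mono_aut_f:
  assumes M: "complex_hadamard M"
  shows "monomial_perm ` mono_aut_f M = monomial_perm ` (mono_aut M :: (complex^'n::finite^'n) set)"
proof
  show "monomial_perm ` mono_aut_f M \<subseteq> monomial_perm ` mono_aut M"
    by (auto simp: mono_aut_f_def)
  show "monomial_perm ` mono_aut M \<subseteq> monomial_perm ` mono_aut_f M"
  proof
    fix \<sigma>
    assume "\<sigma> \<in> monomial_perm ` mono_aut M"
    then obtain P where P: "P \<in> mono_aut M" and \<sigma>: "\<sigma> = monomial_perm P"
      by auto
    have "norm (inverse (det P)) = 1"
      using norm_det_mono_aut[OF M P] by (simp add: norm_inverse)
    then obtain c where c: "norm c = 1" "c ^ CARD('n) = inverse (det P)"
      using unimodular_nth_root[of "inverse (det P)" "CARD('n)"] by auto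
    have "det P \<noteq> 0"
      using norm_det_mono_aut[OF M P] by auto
    then have "det (mat c ** P) = 1"
      by (simp add: det_mul det_mat c(2))
    then have "mat c ** P \<in> mono_aut_f M"
      using mono_aut_scale[OF c(1) P] by (simp add: mono_aut_f_def)
    moreover have "c \<noteq> 0"
      using c(1) by auto
    then have "monomial_perm (mat c ** P) = \<sigma>"
      using monomial_mat_scale(2)[OF mono_aut_memD(1)[OF P]] \<sigma> by simp
    ultimately show "\<sigma> \<in> monomial_perm ` mono_aut_f M"
      by blast
  qed
qed

lemma mono_aut_f_same_perm:
  assumes M: "complex_hadamard M" and L: "L \<in> mono_aut_f M" and L0: "L0 \<in> mono_aut_f M"
    and perm: "monomial_perm L = monomial_perm L0"
  shows "\<exists>c. c ^ CARD('n) = 1 \<and> L = mat c ** (L0 :: complex^'n::finite^'n)"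
proof -
  define X where "X = L ** cnj_transpose L0"
  have X: "X \<in> mono_aut_f M"
    unfolding X_def using L mono_aut_f_cnj_transpose[OF M L0] by (rule mono_aut_f_mult)
  have aut: "L \<in> mono_aut M" "L0 \<in> mono_aut M" "cnj_transpose L0 \<in> mono_aut M"
    using L L0 mono_aut_cnj_transpose[OF M] by (auto simp: mono_aut_f_def)
  have "monomial_perm X = monomial_perm (L0 ** cnj_transpose L0)"
    using aut perm by (simp add: X_def monomial_mat_mult mono_aut_memD)
  then have "monomial_perm X = id"
    using mono_aut_unitary(1)[OF M aut(2)] by (simp add: monomial_perm_one)
  moreover have "\<And>j k. M $ j $ k \<noteq> 0"
    using M by (rule complex_hadamard_nth_nonzero)
  ultimately obtain c where c: "X = mat c"
    using mono_aut_scalar_if_perm_id[of M X] X unfolding mono_aut_f_def by blast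
  have "c ^ CARD('n) = 1"
    using X by (simp add: c mono_aut_f_def det_mat)
  moreover have "L = mat c ** L0"
    using mono_aut_unitary(2)[OF M aut(2)] by (simp add: c[symmetric] X_def matrix_mul_assoc[symmetric])
  ultimately show ?thesis
    by blast
qed

lemma finite_mono_aut_f:
  assumes M: "complex_hadamard M"
  shows "finite (mono_aut_f (M :: complex^'n::finite^'n))"
proof -
  define rep where "rep \<sigma> = (SOME L. L \<in> mono_aut_f M \<and> monomial_perm L = \<sigma>)" for \<sigma>
  have "mono_aut_f M \<subseteq> (\<lambda>(c, \<sigma>). mat c ** rep \<sigma>) ` ({c. c ^ CARD('n) = 1} \<times> UNIV)"
  proof
    fix L
    assume L: "L \<in> mono_aut_f M"
    then have "\<exists>L'. L' \<in> mono_aut_f M \<and> monomial_perm L' = monomial_perm L"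
      by blast
    then have "rep (monomial_perm L) \<in> mono_aut_f M \<and> monomial_perm (rep (monomial_perm L)) = monomial_perm L"
      unfolding rep_def by (rule someI_ex)
    then obtain c where "c ^ CARD('n) = 1" "L = mat c ** rep (monomial_perm L)"
      using mono_aut_f_same_perm[OF M L, of "rep (monomial_perm L)"] by auto
    then have "L = (\<lambda>(c, \<sigma>). mat c ** rep \<sigma>) (c, monomial_perm L)"
      and "(c, monomial_perm L) \<in> {c. c ^ CARD('n) = 1} \<times> UNIV"
      by simp_all
    then show "L \<in> (\<lambda>(c, \<sigma>). mat c ** rep \<sigma>) ` ({c. c ^ CARD('n) = 1} \<times> UNIV)"
      by (rule image_eqI)
  qed
  moreover have "finite ({c :: complex. c ^ CARD('n) = 1} \<times> (UNIV :: ('n \<Rightarrow> 'n) set))"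
    by (intro finite_cartesian_product finite_roots_unity) simp_all
  ultimately show ?thesis
    by (rule finite_subset[OF _ finite_imageI])
qed

lemma carrier_perm_group [simp]: "carrier (perm_group G) = G"
  by (simp add: perm_group_def)

lemma perm_group_mult: "bij \<sigma> \<Longrightarrow> bij \<tau> \<Longrightarrow> \<sigma> \<otimes>\<^bsub>perm_group G\<^esub> \<tau> = \<sigma> \<circ> \<tau>"
  by (simp add: perm_group_def BijGroup_def Bij_def compose_def fun_eq_iff)

lemma perm_group_one: "\<one>\<^bsub>perm_group G\<^esub> = id"
  by (simp add: perm_group_def BijGroup_def fun_eq_iff)

lemma monomial_perm_hom:
  "monomial_perm \<in> hom (mat_group (mono_aut_f M)) (perm_group (monomial_perm ` mono_aut M))"
proof (rule homI)
  fix P Q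
  assume "P \<in> carrier (mat_group (mono_aut_f M))" and "Q \<in> carrier (mat_group (mono_aut_f M))"
  then have "monomial_mat P" "monomial_mat Q"
    by (auto simp: mono_aut_f_def mono_aut_def)
  then show "monomial_perm (P \<otimes>\<^bsub>mat_group (mono_aut_f M)\<^esub> Q)
      = monomial_perm P \<otimes>\<^bsub>perm_group (monomial_perm ` mono_aut M)\<^esub> monomial_perm Q"
    by (simp add: perm_group_mult bij_monomial_perm monomial_mat_mult)
qed (auto simp: mono_aut_f_def)

lemma group_hom_monomial_perm:
  assumes "complex_hadamard M" and "group (perm_group (monomial_perm ` mono_aut M))"
  shows "group_hom (mat_group (mono_aut_f M)) (perm_group (monomial_perm ` mono_aut M)) monomial_perm"
  using group_mono_aut_f[OF assms(1)] assms(2) monomial_perm_hom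
  by (simp add: group_hom_def group_hom_axioms_def)

lemma kernel_monomial_perm_central:
  assumes M: "complex_hadamard M"
  shows "kernel (mat_group (mono_aut_f M)) (perm_group (monomial_perm ` mono_aut M)) monomial_perm
    \<subseteq> group_center (mat_group (mono_aut_f M))"
proof
  fix P
  assume "P \<in> kernel (mat_group (mono_aut_f M)) (perm_group (monomial_perm ` mono_aut M)) monomial_perm"
  then have P: "P \<in> mono_aut_f M" "monomial_perm P = id"
    by (auto simp: kernel_def perm_group_one)
  moreover have "\<And>j k. M $ j $ k \<noteq> 0"
    using M by (rule complex_hadamard_nth_nonzero)
  ultimately obtain c where "P = mat c"
    using mono_aut_scalar_if_perm_id[of M P] unfolding mono_aut_f_def by blast
  then show "P \<in> group_center (mat_group (mono_aut_f M))"
    using P by (simp add: group_center_def mat_matrix_mul_commute)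
qed

section \<open>Stem extensions of perfect groups\<close>

lemma (in group) commutator_mult_central:
  assumes a: "a \<in> carrier G" and b: "b \<in> carrier G"
    and z: "z \<in> group_center G" and w: "w \<in> group_center G"
  shows "(a \<otimes> z) \<otimes> (b \<otimes> w) \<otimes> inv (a \<otimes> z) \<otimes> inv (b \<otimes> w) = a \<otimes> b \<otimes> inv a \<otimes> inv b"
proof -
  have zw: "z \<in> carrier G" "w \<in> carrier G"
    using z w by (auto simp: group_center_def)
  have zb: "z \<otimes> (b \<otimes> w) = (b \<otimes> w) \<otimes> z" and wa: "w \<otimes> inv a = inv a \<otimes> w"
    using a b z w by (auto simp: group_center_def)
  have cancel: "x \<otimes> (inv x \<otimes> y) = y" if "x \<in> carrier G" "y \<in> carrier G" for x y
    using that by (simp add: m_assoc[symmetric])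
  have "(a \<otimes> z) \<otimes> (b \<otimes> w) \<otimes> inv (a \<otimes> z) \<otimes> inv (b \<otimes> w)
      = a \<otimes> (z \<otimes> (b \<otimes> w)) \<otimes> (inv z \<otimes> inv a) \<otimes> (inv w \<otimes> inv b)"
    using a b zw by (simp add: inv_mult_group m_assoc)
  also have "\<dots> = a \<otimes> b \<otimes> (w \<otimes> inv a) \<otimes> (inv w \<otimes> inv b)"
    using a b zw unfolding zb by (simp add: m_assoc cancel)
  also have "\<dots> = a \<otimes> b \<otimes> inv a \<otimes> inv b"
    using a b zw unfolding wa by (simp add: m_assoc cancel)
  finally show ?thesis .
qed

lemma derived_kernel_decompose:
  assumes "group_hom E G \<phi>" and onto: "\<phi> ` carrier E = carrier G" and perfect: "perfect_group G"
    and x: "x \<in> carrier E"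
  shows "\<exists>a\<in>derived E (carrier E). \<exists>z\<in>kernel E G \<phi>. x = a \<otimes>\<^bsub>E\<^esub> z"
proof -
  interpret group_hom E G \<phi> by fact
  have "\<phi> ` derived E (carrier E) = carrier G"
    using derived_img[of "carrier E"] onto perfect by (simp add: perfect_group_def)
  then have "\<phi> x \<in> \<phi> ` derived E (carrier E)"
    using x by simp
  then obtain a where a: "a \<in> derived E (carrier E)" "\<phi> a = \<phi> x"
    by (auto simp del: derived_img)
  have a_carrier: "a \<in> carrier E"
    using a(1) G.derived_in_carrier by blast
  have "inv\<^bsub>E\<^esub> a \<otimes>\<^bsub>E\<^esub> x \<in> kernel E G \<phi>"
    using a_carrier x a(2) by (simp add: kernel_def)
  moreover have "x = a \<otimes>\<^bsub>E\<^esub> (inv\<^bsub>E\<^esub> a \<otimes>\<^bsub>E\<^esub> x)"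
    using a_carrier x by (simp add: G.m_assoc[symmetric])
  ultimately show ?thesis
    using a(1) by blast
qed

text \<open>Modulo a central subgroup a commutator only depends on the cosets of its arguments, and
  every coset of the kernel meets the derived subgroup.\<close>
lemma derived_derived_central_extension:
  assumes hom: "group_hom E G \<phi>" and onto: "\<phi> ` carrier E = carrier G" and perfect: "perfect_group G"
    and central: "kernel E G \<phi> \<subseteq> group_center E"
  shows "derived E (derived E (carrier E)) = derived E (carrier E)"
proof
  interpret group_hom E G \<phi> by fact
  have sub: "derived E (carrier E) \<subseteq> carrier E"
    by (simp add: G.derived_in_carrier)
  then show "derived E (derived E (carrier E)) \<subseteq> derived E (carrier E)"
    by (rule G.mono_derived)
  have "derived_set E (carrier E) \<subseteq> derived_set E (derived E (carrier E))"
  proof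
    fix c
    assume "c \<in> derived_set E (carrier E)"
    then obtain x y where xy: "x \<in> carrier E" "y \<in> carrier E"
      and c: "c = x \<otimes>\<^bsub>E\<^esub> y \<otimes>\<^bsub>E\<^esub> inv\<^bsub>E\<^esub> x \<otimes>\<^bsub>E\<^esub> inv\<^bsub>E\<^esub> y"
      by blast
    obtain a z where a: "a \<in> derived E (carrier E)" "z \<in> kernel E G \<phi>" "x = a \<otimes>\<^bsub>E\<^esub> z"
      using derived_kernel_decompose[OF hom onto perfect xy(1)] by blast
    obtain b w where b: "b \<in> derived E (carrier E)" "w \<in> kernel E G \<phi>" "y = b \<otimes>\<^bsub>E\<^esub> w"
      using derived_kernel_decompose[OF hom onto perfect xy(2)] by blast
    have "c = a \<otimes>\<^bsub>E\<^esub> b \<otimes>\<^bsub>E\<^esub> inv\<^bsub>E\<^esub> a \<otimes>\<^bsub>E\<^esub> inv\<^bsub>E\<^esub> b"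
      unfolding c a(3) b(3) using a b sub central by (intro G.commutator_mult_central) auto
    then show "c \<in> derived_set E (derived E (carrier E))"
      using a b by blast
  qed
  then show "derived E (carrier E) \<subseteq> derived E (derived E (carrier E))"
    unfolding derived_def by (rule G.mono_generate)
qed

lemma stem_extension_group_hom: "stem_extension E \<phi> G \<Longrightarrow> group_hom E G \<phi>"
  by (simp add: stem_extension_def group_hom_def group_hom_axioms_def)

lemma stem_extension_perfect:
  assumes stem: "stem_extension E \<phi> G" and perfect: "perfect_group G"
  shows "perfect_group E"
proof -
  interpret group_hom E G \<phi>
    using stem by (rule stem_extension_group_hom)
  have onto: "\<phi> ` carrier E = carrier G" and ker: "kernel E G \<phi> \<subseteq> derived E (carrier E)"
    using stem by (auto simp: stem_extension_def)
  have "x \<in> derived E (carrier E)" if x: "x \<in> carrier E" for x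
  proof -
    obtain a z where "a \<in> derived E (carrier E)" "z \<in> kernel E G \<phi>" "x = a \<otimes>\<^bsub>E\<^esub> z"
      using derived_kernel_decompose[OF group_hom_axioms onto perfect x] by blast
    then show ?thesis
      using ker subgroup.m_closed[OF G.derived_is_subgroup[OF subset_refl]] by auto
  qed
  then show ?thesis
    using G.derived_in_carrier[OF subset_refl] by (auto simp: perfect_group_def)
qed

lemma stem_extension_derived_subgroup:
  assumes hom: "group_hom E G \<phi>" and onto: "\<phi> ` carrier E = carrier G" and perfect: "perfect_group G"
    and central: "kernel E G \<phi> \<subseteq> group_center E"
  shows "stem_extension (E\<lparr>carrier := derived E (carrier E)\<rparr>) \<phi> G"
proof -
  interpret group_hom E G \<phi> by fact
  define D where "D = derived E (carrier E)"
  have D: "subgroup D E" "D \<subseteq> carrier E"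
    unfolding D_def by (simp_all add: G.derived_is_subgroup G.derived_in_carrier)
  have "derived (E\<lparr>carrier := D\<rparr>) (carrier (E\<lparr>carrier := D\<rparr>)) = D"
    using G.derived_consistent[OF subset_refl D(1)] derived_derived_central_extension[OF assms]
    by (simp add: D_def)
  moreover have "kernel (E\<lparr>carrier := D\<rparr>) G \<phi> \<subseteq> group_center (E\<lparr>carrier := D\<rparr>)"
    using central D(2) by (auto simp: kernel_def group_center_def)
  moreover have "\<phi> ` D = carrier G"
    using derived_img[of "carrier E"] onto perfect by (simp add: D_def perfect_group_def)
  moreover have "\<phi> \<in> hom (E\<lparr>carrier := D\<rparr>) G"
    using D(2) by (intro homI) (auto simp: subset_iff)
  ultimately show ?thesis
    unfolding stem_extension_def D_def[symmetric]
    using subgroup.subgroup_is_group[OF D(1) G.is_group] H.is_group by (auto simp: kernel_def)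
qed

definition image_monoid :: "('a \<Rightarrow> 'b) \<Rightarrow> ('a, 'c) monoid_scheme \<Rightarrow> 'b monoid" where
  "image_monoid f E = \<lparr>carrier = f ` carrier E,
     mult = \<lambda>x y. f (inv_into (carrier E) f x \<otimes>\<^bsub>E\<^esub> inv_into (carrier E) f y),
     one = f \<one>\<^bsub>E\<^esub>\<rparr>"

lemma image_monoid_iso:
  assumes "group E" and inj: "inj_on f (carrier E)"
  shows "group (image_monoid f E)" and "f \<in> iso E (image_monoid f E)"
proof -
  interpret E: group E by fact
  have mult: "f x \<otimes>\<^bsub>image_monoid f E\<^esub> f y = f (x \<otimes>\<^bsub>E\<^esub> y)" if "x \<in> carrier E" "y \<in> carrier E" for x y
    using inj that by (simp add: image_monoid_def)
  have carrier: "carrier (image_monoid f E) = f ` carrier E" and one: "\<one>\<^bsub>image_monoid f E\<^esub> = f \<one>\<^bsub>E\<^esub>"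
    by (simp_all add: image_monoid_def)
  show "group (image_monoid f E)"
  proof (rule groupI)
    show "\<exists>y\<in>carrier (image_monoid f E). y \<otimes>\<^bsub>image_monoid f E\<^esub> x = \<one>\<^bsub>image_monoid f E\<^esub>"
      if x: "x \<in> carrier (image_monoid f E)" for x
    proof -
      obtain u where "u \<in> carrier E" "x = f u"
        using x by (auto simp: carrier)
      then show ?thesis
        by (intro bexI[of _ "f (inv\<^bsub>E\<^esub> u)"]) (auto simp: carrier mult one)
    qed
  qed (auto simp: carrier mult one E.m_assoc)
  then show "f \<in> iso E (image_monoid f E)"
    using inj by (auto simp: iso_def hom_def bij_betw_def carrier mult)
qed

lemma stem_extension_iso:
  assumes stem: "stem_extension E \<phi> G" and "group K" and iso: "h \<in> iso K E"
  shows "stem_extension K (\<phi> \<circ> h) G"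
proof -
  interpret group_hom E G \<phi>
    using stem by (rule stem_extension_group_hom)
  interpret h: group_hom K E h
    using iso \<open>group K\<close> G.is_group by (simp add: group_hom_def group_hom_axioms_def iso_def)
  have bij: "bij_betw h (carrier K) (carrier E)" and inj: "inj_on h (carrier K)"
    using iso by (auto simp: iso_def bij_betw_def)
  have onto: "\<phi> ` carrier E = carrier G" and ker: "kernel E G \<phi> \<subseteq> group_center E \<inter> derived E (carrier E)"
    using stem by (auto simp: stem_extension_def)
  have derived: "h ` derived K (carrier K) = derived E (carrier E)"
    using h.derived_img[of "carrier K"] bij by (simp add: bij_betw_def)
  have "x \<in> group_center K \<inter> derived K (carrier K)" if x: "x \<in> kernel K G (\<phi> \<circ> h)" for x
  proof -
    have xK: "x \<in> carrier K" and hx: "h x \<in> group_center E \<inter> derived E (carrier E)"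
      using x ker by (auto simp: kernel_def)
    have "x \<otimes>\<^bsub>K\<^esub> y = y \<otimes>\<^bsub>K\<^esub> x" if "y \<in> carrier K" for y
      using hx xK that by (intro inj_onD[OF inj]) (auto simp: group_center_def)
    moreover have "x \<in> derived K (carrier K)"
      using hx xK derived h.G.derived_in_carrier[OF subset_refl] by (auto dest: inj_onD[OF inj])
    ultimately show ?thesis
      using xK by (simp add: group_center_def)
  qed
  moreover have "(\<phi> \<circ> h) ` carrier K = carrier G"
    using onto bij unfolding bij_betw_def by (metis image_comp)
  ultimately show ?thesis
    using \<open>group K\<close> H.is_group Group.hom_compose[OF h.homh homh]
    by (auto simp: stem_extension_def)
qed

text \<open>The maximality clause of a Schur cover only quantifies over groups on \<open>nat\<close>; any finite
  stem extension can be transported there.\<close>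
lemma schur_cover_card_maximal:
  assumes cover: "schur_cover E \<phi> G" and stem: "stem_extension K \<psi> G" and fin: "finite (carrier K)"
  shows "card (carrier K) \<le> card (carrier E)"
proof -
  obtain f :: "_ \<Rightarrow> nat" where inj: "inj_on f (carrier K)"
    using finite_imp_inj_to_nat_seg[OF fin] by blast
  have K: "group K"
    using stem by (simp add: stem_extension_def)
  have "inv_into (carrier K) f \<in> iso (image_monoid f K) K"
    using group.iso_set_sym[OF K image_monoid_iso(2)[OF K inj]] .
  then have "stem_extension (image_monoid f K) (\<psi> \<circ> inv_into (carrier K) f) G"
    using stem image_monoid_iso(1)[OF K inj] by (blast intro: stem_extension_iso)
  then have "card (carrier (image_monoid f K)) \<le> card (carrier E)"
    using cover unfolding schur_cover_def by blast
  then show ?thesis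
    using inj by (simp add: image_monoid_def card_image)
qed

definition fibre_product ::
  "('a, 'c) monoid_scheme \<Rightarrow> ('a \<Rightarrow> 'p) \<Rightarrow> ('b, 'd) monoid_scheme \<Rightarrow> ('b \<Rightarrow> 'p) \<Rightarrow> ('a \<times> 'b) monoid"
  where "fibre_product A f B g = (A \<times>\<times> B)\<lparr>carrier := {(x, y) \<in> carrier A \<times> carrier B. f x = g y}\<rparr>"

lemma fibre_product_simps [simp]:
  "carrier (fibre_product A f B g) = {(x, y) \<in> carrier A \<times> carrier B. f x = g y}"
  "p \<otimes>\<^bsub>fibre_product A f B g\<^esub> q = p \<otimes>\<^bsub>A \<times>\<times> B\<^esub> q"
  by (simp_all add: fibre_product_def)

lemma subgroup_fibre_product:
  assumes "group_hom A C f" and "group_hom B C g"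
  shows "subgroup (carrier (fibre_product A f B g)) (A \<times>\<times> B)"
proof -
  interpret f: group_hom A C f by fact
  interpret g: group_hom B C g by fact
  show ?thesis
  proof (rule group.subgroupI[OF DirProd_group[OF f.G.is_group g.G.is_group]])
    have "(\<one>\<^bsub>A\<^esub>, \<one>\<^bsub>B\<^esub>) \<in> carrier (fibre_product A f B g)"
      by simp
    then show "carrier (fibre_product A f B g) \<noteq> {}"
      by blast
  qed (auto simp: f.G.is_group g.G.is_group mult_DirProd')
qed

lemma group_fibre_product:
  assumes "group_hom A C f" and "group_hom B C g"
  shows "group (fibre_product A f B g)"
  using subgroup.subgroup_is_group[OF subgroup_fibre_product[OF assms]]
    DirProd_group[OF group_hom.axioms(1)[OF assms(1)] group_hom.axioms(1)[OF assms(2)]]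
  by (simp add: fibre_product_def)

lemma fst_hom_fibre_product: "fst \<in> hom (fibre_product A f B g) A"
  and snd_hom_fibre_product: "snd \<in> hom (fibre_product A f B g) B"
  by (auto intro!: homI simp: mult_DirProd')

lemma fst_image_fibre_product:
  "f ` carrier A \<subseteq> g ` carrier B \<Longrightarrow> fst ` carrier (fibre_product A f B g) = carrier A"
  by (force simp: image_iff)

lemma snd_image_fibre_product:
  "g ` carrier B \<subseteq> f ` carrier A \<Longrightarrow> snd ` carrier (fibre_product A f B g) = carrier B"
  by (force simp: image_iff)

lemma kernel_fibre_product_central:
  assumes "kernel A C f \<subseteq> group_center A" and "kernel B C g \<subseteq> group_center B"
  shows "kernel (fibre_product A f B g) C (f \<circ> fst) \<subseteq> group_center (fibre_product A f B g)"
proof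
  fix p
  assume p: "p \<in> kernel (fibre_product A f B g) C (f \<circ> fst)"
  then have "fst p \<in> group_center A" "snd p \<in> group_center B"
    using assms by (auto simp: kernel_def)
  then show "p \<in> group_center (fibre_product A f B g)"
    using p by (auto simp: group_center_def kernel_def mult_DirProd')
qed

lemma graph_subgroup_hom:
  assumes D: "subgroup D (A \<times>\<times> B)" and inj: "inj_on fst D" and onto: "fst ` D = carrier A"
  shows "(\<lambda>x. snd (inv_into D fst x)) \<in> hom A B"
    and "(\<lambda>x. snd (inv_into D fst x)) ` carrier A = snd ` D"
proof -
  have lift: "inv_into D fst x \<in> D" "fst (inv_into D fst x) = x" if "x \<in> carrier A" for x
    using that onto by (auto intro: inv_into_into f_inv_into_f)
  show "(\<lambda>x. snd (inv_into D fst x)) \<in> hom A B"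
  proof (rule homI)
    show "snd (inv_into D fst x) \<in> carrier B" if "x \<in> carrier A" for x
      using lift[OF that] subgroup.subset[OF D] by auto
    fix x y
    assume x: "x \<in> carrier A" and y: "y \<in> carrier A"
    have "inv_into D fst x \<otimes>\<^bsub>A \<times>\<times> B\<^esub> inv_into D fst y \<in> D"
      using subgroup.m_closed[OF D lift(1)[OF x] lift(1)[OF y]] .
    moreover have "fst (inv_into D fst x \<otimes>\<^bsub>A \<times>\<times> B\<^esub> inv_into D fst y) = x \<otimes>\<^bsub>A\<^esub> y"
      using lift(2)[OF x] lift(2)[OF y] by (simp add: mult_DirProd')
    ultimately have "inv_into D fst (x \<otimes>\<^bsub>A\<^esub> y) = inv_into D fst x \<otimes>\<^bsub>A \<times>\<times> B\<^esub> inv_into D fst y"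
      using inv_into_f_f[OF inj] by metis
    then show "snd (inv_into D fst (x \<otimes>\<^bsub>A\<^esub> y)) = snd (inv_into D fst x) \<otimes>\<^bsub>B\<^esub> snd (inv_into D fst y)"
      by (simp add: mult_DirProd')
  qed
  have "inv_into D fst ` carrier A = D"
    using inv_into_image_cancel[OF inj subset_refl] onto by simp
  then show "(\<lambda>x. snd (inv_into D fst x)) ` carrier A = snd ` D"
    by (metis image_image)
qed

lemma schur_cover_lift:
  assumes cover: "schur_cover E \<phi> G" and \<pi>: "group_hom \<Gamma> G \<pi>" and onto: "\<pi> ` carrier \<Gamma> = carrier G"
    and central: "kernel \<Gamma> G \<pi> \<subseteq> group_center \<Gamma>"
    and perfect: "perfect_group \<Gamma>" "perfect_group G" and fin: "finite (carrier \<Gamma>)"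
  shows "\<exists>\<theta>. \<theta> \<in> hom E \<Gamma> \<and> \<theta> ` carrier E = carrier \<Gamma> \<and> (\<forall>g\<in>carrier E. \<pi> (\<theta> g) = \<phi> g)"
proof -
  have stem: "stem_extension E \<phi> G" and finE: "finite (carrier E)"
    using cover by (simp_all add: schur_cover_def)
  have \<phi>: "group_hom E G \<phi>"
    using stem by (rule stem_extension_group_hom)
  have ontoE: "\<phi> ` carrier E = carrier G" and centralE: "kernel E G \<phi> \<subseteq> group_center E"
    using stem by (auto simp: stem_extension_def)
  define F where "F = fibre_product E \<phi> \<Gamma> \<pi>"
  define D where "D = derived F (carrier F)"
  interpret F: group F
    unfolding F_def using \<phi> \<pi> by (rule group_fibre_product)
  interpret fst: group_hom F E fst
    using \<phi> F.is_group unfolding group_hom_def group_hom_axioms_def F_def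
    by (simp add: fst_hom_fibre_product group_hom.axioms(1))
  interpret snd: group_hom F \<Gamma> snd
    using \<pi> F.is_group unfolding group_hom_def group_hom_axioms_def F_def
    by (simp add: snd_hom_fibre_product group_hom.axioms(1))
  have fst_onto: "fst ` carrier F = carrier E" and snd_onto: "snd ` carrier F = carrier \<Gamma>"
    unfolding F_def by (rule fst_image_fibre_product, simp add: ontoE onto)
      (rule snd_image_fibre_product, simp add: ontoE onto)
  have \<kappa>: "group_hom F G (\<phi> \<circ> fst)"
    using F.is_group group_hom.axioms(2)[OF \<phi>] Group.hom_compose[OF fst.homh group_hom.homh[OF \<phi>]]
    unfolding group_hom_def group_hom_axioms_def by blast
  have "(\<phi> \<circ> fst) ` carrier F = carrier G"
    using fst_onto ontoE by (metis image_comp)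
  then have stemD: "stem_extension (F\<lparr>carrier := D\<rparr>) (\<phi> \<circ> fst) G"
    unfolding D_def using \<kappa> perfect(2) kernel_fibre_product_central[OF centralE central]
    by (intro stem_extension_derived_subgroup) (simp_all add: F_def)
  have DF: "D \<subseteq> carrier F"
    unfolding D_def by (rule F.derived_in_carrier[OF subset_refl])
  then have "finite D"
  proof (rule finite_subset)
    show "finite (carrier F)"
      unfolding F_def by (rule finite_subset[OF _ finite_cartesian_product[OF finE fin]]) auto
  qed
  then have card: "card D \<le> card (carrier E)"
    using schur_cover_card_maximal[OF cover stemD] by simp
  have fstD: "fst ` D = carrier E"
    using fst.derived_img[of "carrier F"] fst_onto stem_extension_perfect[OF stem perfect(2)]
    by (simp add: D_def perfect_group_def)
  have sndD: "snd ` D = carrier \<Gamma>"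
    using snd.derived_img[of "carrier F"] snd_onto perfect(1) by (simp add: D_def perfect_group_def)
  have inj: "inj_on fst D"
    using card fstD card_image_le[OF \<open>finite D\<close>, of fst] \<open>finite D\<close> by (intro eq_card_imp_inj_on) simp_all
  have subD: "subgroup D (E \<times>\<times> \<Gamma>)"
    using group.incl_subgroup[OF DirProd_group[OF fst.H.is_group snd.H.is_group]
        subgroup_fibre_product[OF \<phi> \<pi>]] F.derived_is_subgroup[OF subset_refl]
    by (simp add: D_def F_def fibre_product_def)
  have "\<pi> (snd (inv_into D fst g)) = \<phi> g" if "g \<in> carrier E" for g
  proof -
    have "inv_into D fst g \<in> carrier F" "fst (inv_into D fst g) = g"
      using that fstD DF by (auto intro: inv_into_into f_inv_into_f)
    then show ?thesis
      by (auto simp: F_def)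
  qed
  then show ?thesis
    using graph_subgroup_hom[OF subD inj fstD] sndD by auto
qed

section \<open>Transitive monomial representations are induced\<close>

locale transitive_monomial_rep = group E for E :: "('e, 'c) monoid_scheme" (structure) +
  fixes \<theta> :: "'e \<Rightarrow> complex^'n::finite^'n" and i :: 'n
  assumes rep_mult: "g \<in> carrier E \<Longrightarrow> h \<in> carrier E \<Longrightarrow> \<theta> (g \<otimes> h) = \<theta> g ** \<theta> h"
    and rep_monomial: "g \<in> carrier E \<Longrightarrow> monomial_mat (\<theta> g)"
    and rep_transitive: "\<exists>g\<in>carrier E. monomial_perm (\<theta> g) i = j"
begin

abbreviation perm :: "'e \<Rightarrow> 'n \<Rightarrow> 'n" where
  "perm g \<equiv> monomial_perm (\<theta> g)"

definition stabiliser :: "'e set" where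
  "stabiliser = {g \<in> carrier E. perm g i = i}"

definition stabiliser_char :: "'e \<Rightarrow> complex" where
  "stabiliser_char h = \<theta> h $ i $ i"

definition transversal :: "'n \<Rightarrow> 'e" where
  "transversal j = (SOME g. g \<in> carrier E \<and> perm g i = j)"

definition intertwiner :: "complex^'n^'n" where
  "intertwiner = (\<chi> j k. if j = k then \<theta> (transversal j) $ j $ i else 0)"

lemma rep_nonzero_iff: "g \<in> carrier E \<Longrightarrow> \<theta> g $ j $ k \<noteq> 0 \<longleftrightarrow> j = perm g k"
  by (simp add: monomial_mat_nth_nonzero_iff rep_monomial)

lemma perm_mult: "g \<in> carrier E \<Longrightarrow> h \<in> carrier E \<Longrightarrow> perm (g \<otimes> h) = perm g \<circ> perm h"
  by (simp add: rep_mult rep_monomial monomial_mat_mult)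

lemma perm_one: "perm \<one> = id"
proof
  fix j
  have "perm \<one> (perm \<one> j) = perm \<one> j"
    using perm_mult[of \<one> \<one>] by (simp add: fun_eq_iff)
  then show "perm \<one> j = id j"
    using bij_monomial_perm[OF rep_monomial[OF one_closed]] by (simp add: bij_def inj_eq)
qed

lemma transversal: "transversal j \<in> carrier E" "perm (transversal j) i = j"
  using someI_ex[OF rep_transitive[of j, unfolded Bex_def]] by (simp_all add: transversal_def)

lemma conj_mem_stabiliser_iff:
  assumes a: "a \<in> carrier E" and g: "g \<in> carrier E" and b: "b \<in> carrier E"
  shows "inv a \<otimes> g \<otimes> b \<in> stabiliser \<longleftrightarrow> perm g (perm b i) = perm a i"
proof -
  define x where "x = inv a \<otimes> g \<otimes> b"
  have x: "x \<in> carrier E" and ax: "a \<otimes> x = g \<otimes> b"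
    using a g b by (simp_all add: x_def m_assoc[symmetric])
  have "perm g (perm b i) = perm (g \<otimes> b) i"
    using g b by (simp add: perm_mult)
  also have "\<dots> = perm a (perm x i)"
    using a x by (simp add: ax[symmetric] perm_mult)
  finally have "perm g (perm b i) = perm a (perm x i)" .
  moreover have "inj (perm a)"
    using bij_monomial_perm[OF rep_monomial[OF a]] by (rule bij_is_inj)
  ultimately show ?thesis
    using x by (simp add: stabiliser_def x_def[symmetric] inj_eq)
qed

lemma linear_character_stabiliser: "linear_character E stabiliser stabiliser_char"
  unfolding linear_character_def
proof (intro conjI ballI)
  fix h k
  assume h: "h \<in> stabiliser" and k: "k \<in> stabiliser"
  then show "stabiliser_char h \<noteq> 0"
    by (simp add: stabiliser_def stabiliser_char_def rep_nonzero_iff)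
  have "(\<theta> h ** \<theta> k) $ i $ i = \<theta> h $ i $ i * \<theta> k $ i $ i"
    using k by (intro matrix_mul_nth_single_col) (auto simp: stabiliser_def rep_nonzero_iff)
  then show "stabiliser_char (h \<otimes> k) = stabiliser_char h * stabiliser_char k"
    using h k by (simp add: stabiliser_def stabiliser_char_def rep_mult)
qed

lemma left_transversal_transversal: "left_transversal E stabiliser transversal"
  unfolding left_transversal_def
proof (intro conjI allI ballI)
  show "transversal j \<in> carrier E" for j
    by (rule transversal)
  fix g
  assume g: "g \<in> carrier E"
  have "inv transversal j \<otimes> g \<in> stabiliser \<longleftrightarrow> perm g i = j" for j
    using conj_mem_stabiliser_iff[OF transversal(1) g one_closed] transversal g
    by (simp add: perm_one)
  then show "\<exists>!j. inv transversal j \<otimes> g \<in> stabiliser"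
    by auto
qed

lemma invertible_intertwiner: "invertible intertwiner"
  unfolding intertwiner_def using transversal by (intro invertible_diagonal) (simp add: rep_nonzero_iff)

text \<open>Comparing the \<open>(j, i)\<close> entries of \<open>\<theta> (t\<^sub>j) \<theta> (x) = \<theta> (g) \<theta> (t\<^sub>k)\<close> for
  \<open>x = t\<^sub>j\<inverse> g t\<^sub>k\<close> in the stabiliser.\<close>
lemma rep_intertwines:
  assumes g: "g \<in> carrier E"
  shows "\<theta> g ** intertwiner = intertwiner ** induced_mat E stabiliser stabiliser_char transversal g"
proof -
  define t where "t = transversal"
  have t: "t j \<in> carrier E" "perm (t j) i = j" for j
    unfolding t_def by (rule transversal)+
  have "(\<theta> g ** intertwiner) $ j $ k = (intertwiner ** induced_mat E stabiliser stabiliser_char t g) $ j $ k"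
    for j k
  proof -
    define x where "x = inv t j \<otimes> g \<otimes> t k"
    have "(\<theta> g ** intertwiner) $ j $ k = \<theta> g $ j $ k * \<theta> (t k) $ k $ i"
      by (subst matrix_mul_nth_single_col[where c = k]) (simp_all add: intertwiner_def t_def split: if_splits)
    moreover have "(intertwiner ** induced_mat E stabiliser stabiliser_char t g) $ j $ k
        = \<theta> (t j) $ j $ i * (if x \<in> stabiliser then stabiliser_char x else 0)"
      by (subst matrix_mul_nth_single_row[where c = j])
        (simp_all add: intertwiner_def induced_mat_def x_def t_def Let_def split: if_splits)
    moreover have "\<theta> (t j) $ j $ i * stabiliser_char x = \<theta> g $ j $ k * \<theta> (t k) $ k $ i"
      if x: "x \<in> stabiliser"
    proof -
      have xE: "x \<in> carrier E" and xi: "perm x i = i"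
        using x by (auto simp: stabiliser_def)
      have "t j \<otimes> x = g \<otimes> t k"
        using t(1)[of j] t(1)[of k] g by (simp add: x_def m_assoc[symmetric])
      then have "(\<theta> (t j) ** \<theta> x) $ j $ i = (\<theta> g ** \<theta> (t k)) $ j $ i"
        using rep_mult t(1) xE g by metis
      moreover have "(\<theta> (t j) ** \<theta> x) $ j $ i = \<theta> (t j) $ j $ i * \<theta> x $ i $ i"
        using xE xi by (intro matrix_mul_nth_single_col) (auto simp: rep_nonzero_iff)
      moreover have "(\<theta> g ** \<theta> (t k)) $ j $ i = \<theta> g $ j $ k * \<theta> (t k) $ k $ i"
        using t by (intro matrix_mul_nth_single_col) (auto simp: rep_nonzero_iff)
      ultimately show ?thesis
        by (simp add: stabiliser_char_def)
    qed
    moreover have "\<theta> g $ j $ k = 0" if "x \<notin> stabiliser"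
    proof -
      have "j \<noteq> perm g k"
        using that conj_mem_stabiliser_iff[OF t(1) g t(1), of j k] t(2) by (simp add: x_def)
      then show ?thesis
        using rep_nonzero_iff[OF g] by blast
    qed
    ultimately show ?thesis
      by auto
  qed
  then show ?thesis
    by (simp add: vec_eq_iff t_def)
qed

theorem induced_from_linear_char_stabiliser: "induced_from_linear_char E stabiliser \<theta>"
  unfolding induced_from_linear_char_def
  using invertible_monomial_mat[OF rep_monomial] rep_mult linear_character_stabiliser
    left_transversal_transversal invertible_intertwiner rep_intertwines
  by blast

end

lemma transitive_monomial_repI:
  assumes "group E" and \<theta>: "\<theta> \<in> hom E (mat_group S)" and "\<And>P. P \<in> S \<Longrightarrow> monomial_mat P"
    and "\<And>j. \<exists>g\<in>carrier E. monomial_perm (\<theta> g) i = j"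
  shows "transitive_monomial_rep E \<theta> i"
proof (intro transitive_monomial_rep.intro transitive_monomial_rep_axioms.intro)
  show "\<theta> (g \<otimes>\<^bsub>E\<^esub> h) = \<theta> g ** \<theta> h" if "g \<in> carrier E" "h \<in> carrier E" for g h
    using hom_mult[OF \<theta> that] by simp
  show "monomial_mat (\<theta> g)" if "g \<in> carrier E" for g
    using hom_in_carrier[OF \<theta> that] assms(3) by simp
qed (use assms in simp_all)

theorem proposition6p2:
  fixes M :: "complex^'n::finite^'n"
    and Ghat :: "('g, 'c) monoid_scheme"
    and proj :: "'g \<Rightarrow> ('n \<Rightarrow> 'n)"
    and i :: 'n
  defines "\<Gamma> \<equiv> mono_aut M"
    and "G \<equiv> monomial_perm ` mono_aut M"
    and "\<Gamma>f \<equiv> mono_aut_f M"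
    and "H \<equiv> {\<sigma> \<in> monomial_perm ` mono_aut M. \<sigma> i = i}"
  assumes "complex_hadamard M"
    and "transitive_perms G"
    and "perfect_group (perm_group G)"
    and "perfect_group (mat_group \<Gamma>f)"
    and "schur_cover Ghat proj (perm_group G)"
  shows "\<exists>\<rho>. induced_from_linear_char Ghat {g \<in> carrier Ghat. proj g \<in> H} \<rho>
              \<and> \<rho> ` carrier Ghat = \<Gamma>f"
proof -
  note M = assms(5)
  have stem: "stem_extension Ghat proj (perm_group G)"
    using assms(9) by (simp add: schur_cover_def)
  have "group (perm_group G)"
    using stem by (simp add: stem_extension_def)
  then have "\<exists>\<theta>. \<theta> \<in> hom Ghat (mat_group \<Gamma>f) \<and> \<theta> ` carrier Ghat = carrier (mat_group \<Gamma>f)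
      \<and> (\<forall>g\<in>carrier Ghat. monomial_perm (\<theta> g) = proj g)"
    using schur_cover_lift[OF assms(9)[unfolded G_def] group_hom_monomial_perm[OF M]
        _ kernel_monomial_perm_central[OF M]]
      assms(7,8) monomial_perm_image_mono_aut_f[OF M] finite_mono_aut_f[OF M]
    by (simp add: G_def \<Gamma>f_def)
  then obtain \<theta> where \<theta>: "\<theta> \<in> hom Ghat (mat_group \<Gamma>f)" "\<theta> ` carrier Ghat = \<Gamma>f"
    and lift: "\<And>g. g \<in> carrier Ghat \<Longrightarrow> monomial_perm (\<theta> g) = proj g"
    by auto
  have "\<exists>g\<in>carrier Ghat. monomial_perm (\<theta> g) i = j" for j
    using \<open>transitive_perms G\<close> stem lift by (fastforce simp: transitive_perms_def stem_extension_def)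
  then interpret transitive_monomial_rep Ghat \<theta> i
    using stem \<theta>(1) by (intro transitive_monomial_repI) (auto simp: stem_extension_def \<Gamma>f_def mono_aut_f_def mono_aut_def)
  have "{g \<in> carrier Ghat. proj g \<in> H} = stabiliser"
    using stem lift by (auto simp: H_def G_def stabiliser_def stem_extension_def hom_def)
  then show ?thesis
    using induced_from_linear_char_stabiliser \<theta>(2) by auto
qed

end
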